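(* For all $n\ge0$ and $u^n\in\mathbb S$, the intermediate iterate $\hat u^{n+1}$ satisfies $$\|\hat u^{n+1}\|_{L^2}-\|u^n\|_{L^2}=\frac{(u^n-u^{n+1},u^n)_{L^2}}{(u^{n+1},u^n)_{L^2}}\ge0,$$ and $\|\hat u^{n+1}\|_{L^2}=\|u^n\|_{L^2}$ if and only if $u^n=\hat u^{n+1}$.
   Context: Let $\mathcal D\subset\mathbb R^d$, $d\in\{2,3\}$, be a bounded convex domain, $V\in L^\infty(\mathcal D;\mathbb R_{\ge0})$, $\beta\ge0$, $\Omega\in\mathbb R$, with $K>0$ such that $V(x)-\frac{1+K}{4}\Omega^2(x_1^2+x_2^2)\ge0$ a.e. $L^2(\mathcal D;\mathbb C)$, $H^1_0(\mathcal D;\mathbb C)$ are real Hilbert spaces with $(v,w)_{L^2}=\mathrm{Re}\int v\bar w$; $\langle\cdot,\cdot\rangle$ is the $H^{-1}$--$H^1_0$ pairing; $\mathbb S=\{v\in H^1_0:\|v\|_{L^2}=1\}$. With $\mathcal L_3=-\mathrm{i}(x_1\partial_{x_2}-x_2\partial_{x_1})$, for $z\in H^1_0$ let $\langle\mathcal A_{|z|}v,w\rangle=(\nabla v,\nabla w)_{L^2}+(Vv,w)_{L^2}-\Omega(\mathcal L_3v,w)_{L^2}+\beta(|z|^2v,w)_{L^2}$, and for $f\in L^2$ let $\mathcal A_{|z|}^{-1}\mathcal If$ be the unique $q\in H^1_0$ with $\langle\mathcal A_{|z|}q,w\rangle=(f,w)_{L^2}$ for all $w\in H^1_0$. Energy-adaptive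 Riemannian gradient method with step sizes $\tau_n>0$: $\gamma^n=(u^n,\mathcal A_{|u^n|}^{-1}\mathcal Iu^n)_{L^2}^{-1}$, $\hat u^{n+1}=(1-\tau_n)u^n+\tau_n\gamma^n\mathcal A_{|u^n|}^{-1}\mathcal Iu^n$, $u^{n+1}=\hat u^{n+1}/\|\hat u^{n+1}\|_{L^2}$. *)

theory Defs
  imports "HOL-Analysis.Analysis"
begin

fun Ck :: "nat \<Rightarrow> ('a::euclidean_space \<Rightarrow> 'b::real_normed_vector) \<Rightarrow> bool" where
  "Ck 0 f = continuous_on UNIV f"
| "Ck (Suc k) f = (continuous_on UNIV f \<and> (\<forall>x. f differentiable (at x)) \<and>
      (\<forall>b\<in>Basis. Ck k (\<lambda>x. frechet_derivative f (at x) b)))"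

definition smooth_fun :: "('a::euclidean_space \<Rightarrow> 'b::real_normed_vector) \<Rightarrow> bool" where
  "smooth_fun f \<longleftrightarrow> (\<forall>k. Ck k f)"

definition test_fun :: "'a::euclidean_space set \<Rightarrow> ('a \<Rightarrow> complex) \<Rightarrow> bool" where
  "test_fun D \<phi> \<longleftrightarrow> smooth_fun \<phi> \<and> compact (closure {x. \<phi> x \<noteq> 0})
                        \<and> closure {x. \<phi> x \<noteq> 0} \<subseteq> D"

definition cpd :: "('a::euclidean_space \<Rightarrow> complex) \<Rightarrow> 'a \<Rightarrow> 'a \<Rightarrow> complex" where
  "cpd \<phi> b x = frechet_derivative \<phi> (at x) b"

text \<open>Membership in \<open>L^2(D;\<complex>)\<close> (functions are identified a.e. on D).\<close>
definition in_L2 :: "'a::euclidean_space set \<Rightarrow> ('a \<Rightarrow> complex) \<Rightarrow> bool" where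
  "in_L2 D v \<longleftrightarrow> set_borel_measurable lebesgue D v
                 \<and> set_integrable lebesgue D (\<lambda>x. (cmod (v x))\<^sup>2)"

definition l2_inner :: "'a::euclidean_space set \<Rightarrow> ('a \<Rightarrow> complex) \<Rightarrow> ('a \<Rightarrow> complex) \<Rightarrow> real" where
  "l2_inner D v w = Re (LINT x:D|lebesgue. v x * cnj (w x))"

definition l2_norm :: "'a::euclidean_space set \<Rightarrow> ('a \<Rightarrow> complex) \<Rightarrow> real" where
  "l2_norm D v = sqrt (LINT x:D|lebesgue. (cmod (v x))\<^sup>2)"

definition has_weak_pd :: "'a::euclidean_space set \<Rightarrow> ('a \<Rightarrow> complex) \<Rightarrow> 'a \<Rightarrow> ('a \<Rightarrow> complex) \<Rightarrow> bool" where
  "has_weak_pd D v b g \<longleftrightarrow> in_L2 D g \<and>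
     (\<forall>\<phi>. test_fun D \<phi> \<longrightarrow>
        (LINT x:D|lebesgue. v x * cpd \<phi> b x) = - (LINT x:D|lebesgue. g x * \<phi> x))"

definition wpd :: "'a::euclidean_space set \<Rightarrow> ('a \<Rightarrow> complex) \<Rightarrow> 'a \<Rightarrow> ('a \<Rightarrow> complex)" where
  "wpd D v b = (SOME g. has_weak_pd D v b g)"

definition in_H10 :: "'a::euclidean_space set \<Rightarrow> ('a \<Rightarrow> complex) \<Rightarrow> bool" where
  "in_H10 D v \<longleftrightarrow> in_L2 D v \<and> (\<forall>b\<in>Basis. \<exists>g. has_weak_pd D v b g) \<and>
     (\<exists>\<phi>s. (\<forall>k. test_fun D (\<phi>s k)) \<and>
        (\<lambda>k. l2_norm D (\<lambda>x. \<phi>s k x - v x)) \<longlonglongrightarrow> 0 \<and>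
        (\<forall>b\<in>Basis. (\<lambda>k. l2_norm D (\<lambda>x. cpd (\<phi>s k) b x - wpd D v b x)) \<longlonglongrightarrow> 0))"

definition L3 :: "'a::euclidean_space set \<Rightarrow> 'a \<Rightarrow> 'a \<Rightarrow> ('a \<Rightarrow> complex) \<Rightarrow> ('a \<Rightarrow> complex)" where
  "L3 D e1 e2 v = (\<lambda>x. - \<i> * (complex_of_real (x \<bullet> e1) * wpd D v e2 x
                               - complex_of_real (x \<bullet> e2) * wpd D v e1 x))"

definition A_form :: "'a::euclidean_space set \<Rightarrow> 'a \<Rightarrow> 'a \<Rightarrow> ('a \<Rightarrow> real) \<Rightarrow> real \<Rightarrow> real
                     \<Rightarrow> ('a \<Rightarrow> complex) \<Rightarrow> ('a \<Rightarrow> complex) \<Rightarrow> ('a \<Rightarrow> complex) \<Rightarrow> real" where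
  "A_form D e1 e2 V \<beta> \<Omega> z v w =
     (\<Sum>b\<in>Basis. l2_inner D (wpd D v b) (wpd D w b))
     + l2_inner D (\<lambda>x. complex_of_real (V x) * v x) w
     - \<Omega> * l2_inner D (L3 D e1 e2 v) w
     + \<beta> * l2_inner D (\<lambda>x. complex_of_real ((cmod (z x))\<^sup>2) * v x) w"

end

theory Submission
  imports Defs
begin

text \<open>The choice of \<open>\<gamma>\<close> makes \<open>(\<hat>u, u) = 1\<close>, provided \<open>(u, q) \<noteq> 0\<close> for
  \<open>q = A\<^sup>-\<^sup>1 u\<close>.  The latter holds because \<open>A\<close> is coercive: if \<open>(u, q) = 0\<close> then
  \<open>\<langle>A q, q\<rangle> = 0\<close>, so \<open>\<nabla>q = 0\<close>, hence \<open>q = 0\<close> by a Poincare-type argument in \<open>H\<^sup>1\<^sub>0\<close>,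
  contradicting \<open>\<langle>A q, u\<rangle> = \<parallel>u\<parallel>\<^sup>2 = 1\<close>.  Once \<open>(\<hat>u, u) = 1\<close>, with \<open>N = \<parallel>\<hat>u\<parallel>\<close> one has
  \<open>\<parallel>\<hat>u - u\<parallel>\<^sup>2 = N\<^sup>2 - 1\<close>, so \<open>N \<ge> 1\<close> with equality iff \<open>\<hat>u = u\<close>, while
  \<open>(u - u\<^sup>n\<^sup>+\<^sup>1, u) = 1 - 1/N\<close> and \<open>(u\<^sup>n\<^sup>+\<^sup>1, u) = 1/N\<close>.\<close>

section \<open>Square-integrable functions\<close>

definition square_integrable :: "'a measure \<Rightarrow> ('a \<Rightarrow> complex) \<Rightarrow> bool" where
  "square_integrable M v \<longleftrightarrow> v \<in> borel_measurable M \<and> integrable M (\<lambda>x. (cmod (v x))\<^sup>2)"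

lemma borel_measurable_cnj [measurable]:
  "f \<in> borel_measurable M \<Longrightarrow> (\<lambda>x. cnj (f x)) \<in> borel_measurable M"
  by (rule borel_measurable_continuous_on[of cnj]) (auto intro: continuous_on_cnj continuous_on_id)

lemma square_integrable_integrable: "square_integrable M v \<Longrightarrow> integrable M (\<lambda>x. (cmod (v x))\<^sup>2)"
  by (simp add: square_integrable_def)

lemma integrable_norm_mult_norm:
  assumes "square_integrable M v" "square_integrable M w"
  shows "integrable M (\<lambda>x. cmod (v x) * cmod (w x))"
proof (rule Bochner_Integration.integrable_bound)
  show "integrable M (\<lambda>x. (cmod (v x))\<^sup>2 + (cmod (w x))\<^sup>2)"
    using assms by (auto simp: square_integrable_def)
  show "(\<lambda>x. cmod (v x) * cmod (w x)) \<in> borel_measurable M"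
    using assms by (auto simp: square_integrable_def)
  have "cmod (v x) * cmod (w x) \<le> (cmod (v x))\<^sup>2 + (cmod (w x))\<^sup>2" for x
  proof -
    have "0 \<le> cmod (v x) * cmod (w x)" by simp
    then show ?thesis using sum_squares_bound[of "cmod (v x)" "cmod (w x)"] by linarith
  qed
  then show "AE x in M. norm (cmod (v x) * cmod (w x)) \<le> norm ((cmod (v x))\<^sup>2 + (cmod (w x))\<^sup>2)"
    by (intro AE_I2) simp
qed

lemma integrable_mult_cnj:
  assumes "square_integrable M v" "square_integrable M w"
  shows "integrable M (\<lambda>x. v x * cnj (w x))"
proof (rule Bochner_Integration.integrable_bound[OF integrable_norm_mult_norm[OF assms]])
  have [measurable]: "v \<in> borel_measurable M" "w \<in> borel_measurable M"
    using assms by (auto simp: square_integrable_def)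
  show "(\<lambda>x. v x * cnj (w x)) \<in> borel_measurable M" by measurable
qed (auto simp: norm_mult)

lemma square_integrable_add:
  assumes "square_integrable M v" "square_integrable M w"
  shows "square_integrable M (\<lambda>x. v x + w x)"
  unfolding square_integrable_def
proof
  show "(\<lambda>x. v x + w x) \<in> borel_measurable M"
    using assms by (auto simp: square_integrable_def)
  have "(cmod (v x + w x))\<^sup>2 \<le> 2 * ((cmod (v x))\<^sup>2 + (cmod (w x))\<^sup>2)" for x
  proof -
    have "(cmod (v x + w x))\<^sup>2 \<le> (cmod (v x) + cmod (w x))\<^sup>2"
      by (intro power_mono norm_triangle_ineq) simp
    also have "\<dots> \<le> 2 * ((cmod (v x))\<^sup>2 + (cmod (w x))\<^sup>2)"
      using sum_squares_bound[of "cmod (v x)" "cmod (w x)"] by (simp add: power2_sum)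
    finally show ?thesis .
  qed
  moreover have bound_int: "integrable M (\<lambda>x. 2 * ((cmod (v x))\<^sup>2 + (cmod (w x))\<^sup>2))"
    using assms by (auto simp: square_integrable_def)
  ultimately show "integrable M (\<lambda>x. (cmod (v x + w x))\<^sup>2)"
    using assms
    by (intro Bochner_Integration.integrable_bound[OF bound_int] AE_I2)
       (auto simp: square_integrable_def)
qed

lemma square_integrable_mult_left:
  "square_integrable M v \<Longrightarrow> square_integrable M (\<lambda>x. c * v x)"
  by (auto simp: square_integrable_def norm_mult power_mult_distrib)

lemma square_integrable_diff:
  assumes "square_integrable M v" "square_integrable M w"
  shows "square_integrable M (\<lambda>x. v x - w x)"
  using square_integrable_add[OF assms(1) square_integrable_mult_left[OF assms(2), of "-1"]] by simp

lemma square_integrable_bounded: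
  assumes "finite_measure M" "v \<in> borel_measurable M" "\<And>x. x \<in> space M \<Longrightarrow> cmod (v x) \<le> B"
  shows "square_integrable M v"
  unfolding square_integrable_def
proof
  show "integrable M (\<lambda>x. (cmod (v x))\<^sup>2)"
    using assms
    by (intro Bochner_Integration.integrable_bound[OF finite_measure.integrable_const[of M "B\<^sup>2"]]
              AE_I2) (auto intro!: power_mono)
qed fact

lemma integral_mult_le_sqrt_integral_square:
  fixes f g :: "'a \<Rightarrow> real"
  assumes [measurable]: "f \<in> borel_measurable M" "g \<in> borel_measurable M"
    and nonneg: "\<And>x. 0 \<le> f x" "\<And>x. 0 \<le> g x"
    and int: "integrable M (\<lambda>x. (f x)\<^sup>2)" "integrable M (\<lambda>x. (g x)\<^sup>2)"
  shows "(\<integral>x. f x * g x \<partial>M) \<le> sqrt (\<integral>x. (f x)\<^sup>2 \<partial>M) * sqrt (\<integral>x. (g x)\<^sup>2 \<partial>M)"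
proof -
  have "f x * g x \<le> (f x)\<^sup>2 + (g x)\<^sup>2" for x
    using nonneg[of x] sum_squares_bound[of "f x" "g x"] mult_nonneg_nonneg[of "f x" "g x"] by linarith
  then have int_fg: "integrable M (\<lambda>x. f x * g x)"
    using nonneg
    by (intro Bochner_Integration.integrable_bound[OF Bochner_Integration.integrable_add[OF int]] AE_I2)
       auto
  have nn: "(\<integral>\<^sup>+x. ennreal (h x) \<partial>M) = ennreal (\<integral>x. h x \<partial>M)"
    if "integrable M h" "\<And>x. 0 \<le> h x" for h
    using that by (intro nn_integral_eq_integral) auto
  have "(\<integral>\<^sup>+x. ennreal (f x) * ennreal (g x) \<partial>M)\<^sup>2
      \<le> (\<integral>\<^sup>+x. ennreal (f x) ^ 2 \<partial>M) * (\<integral>\<^sup>+x. ennreal (g x) ^ 2 \<partial>M)"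
    by (intro Cauchy_Schwarz_nn_integral) measurable
  also have "(\<lambda>x. ennreal (f x) * ennreal (g x)) = (\<lambda>x. ennreal (f x * g x))"
    using nonneg by (simp add: ennreal_mult)
  also have "(\<lambda>x. ennreal (f x) ^ 2) = (\<lambda>x. ennreal ((f x)\<^sup>2))"
    using nonneg by (simp add: ennreal_power)
  also have "(\<lambda>x. ennreal (g x) ^ 2) = (\<lambda>x. ennreal ((g x)\<^sup>2))"
    using nonneg by (simp add: ennreal_power)
  finally have "ennreal (\<integral>x. f x * g x \<partial>M) ^ 2
      \<le> ennreal (\<integral>x. (f x)\<^sup>2 \<partial>M) * ennreal (\<integral>x. (g x)\<^sup>2 \<partial>M)"
    using nonneg int int_fg by (simp add: nn)
  then have "(\<integral>x. f x * g x \<partial>M)\<^sup>2 \<le> (\<integral>x. (f x)\<^sup>2 \<partial>M) * (\<integral>x. (g x)\<^sup>2 \<partial>M)"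
    using nonneg
    by (simp add: ennreal_power integral_nonneg_AE flip: ennreal_mult)
  then show ?thesis
    by (simp add: real_le_rsqrt flip: real_sqrt_mult)
qed

lemma integral_mult_cnj_self: "(\<integral>x. v x * cnj (v x) \<partial>M) = complex_of_real (\<integral>x. (cmod (v x))\<^sup>2 \<partial>M)"
  by (simp only: complex_norm_square[symmetric] integral_complex_of_real)

lemma cmod_integral_mult_cnj_le:
  assumes "square_integrable M v" "square_integrable M w"
  shows "cmod (\<integral>x. v x * cnj (w x) \<partial>M) \<le> sqrt (\<integral>x. (cmod (v x))\<^sup>2 \<partial>M) * sqrt (\<integral>x. (cmod (w x))\<^sup>2 \<partial>M)"
proof -
  have "cmod (\<integral>x. v x * cnj (w x) \<partial>M) \<le> (\<integral>x. cmod (v x) * cmod (w x) \<partial>M)"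
    using integral_norm_bound[of M "\<lambda>x. v x * cnj (w x)"] by (simp add: norm_mult)
  also have "\<dots> \<le> sqrt (\<integral>x. (cmod (v x))\<^sup>2 \<partial>M) * sqrt (\<integral>x. (cmod (w x))\<^sup>2 \<partial>M)"
    using assms by (intro integral_mult_le_sqrt_integral_square) (auto simp: square_integrable_def)
  finally show ?thesis .
qed

section \<open>The inner product and norm of \<open>L\<^sup>2(D)\<close>\<close>

lemma open_imp_sets_lebesgue: "open D \<Longrightarrow> (D :: 'a::euclidean_space set) \<in> sets lebesgue"
  by (simp add: borel_open)

lemma set_integral_eq_integral_on:
  fixes f :: "'a::euclidean_space \<Rightarrow> 'b::{banach, second_countable_topology}"
  shows "D \<in> sets lebesgue \<Longrightarrow> (LINT x:D|lebesgue. f x) = (\<integral>x. f x \<partial>lebesgue_on D)"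
  by (simp add: set_lebesgue_integral_def integral_restrict_space)

lemma l2_inner_eq_integral:
  "D \<in> sets lebesgue \<Longrightarrow> l2_inner D v w = Re (\<integral>x. v x * cnj (w x) \<partial>lebesgue_on D)"
  by (simp add: l2_inner_def set_integral_eq_integral_on)

lemma l2_norm_eq_integral:
  "D \<in> sets lebesgue \<Longrightarrow> l2_norm D v = sqrt (\<integral>x. (cmod (v x))\<^sup>2 \<partial>lebesgue_on D)"
  by (simp add: l2_norm_def set_integral_eq_integral_on)

lemma l2_norm_nonneg: "D \<in> sets lebesgue \<Longrightarrow> 0 \<le> l2_norm D v"
  by (simp add: l2_norm_eq_integral)

lemma l2_inner_self: "D \<in> sets lebesgue \<Longrightarrow> l2_inner D v v = (l2_norm D v)\<^sup>2"
  by (simp add: l2_inner_eq_integral l2_norm_eq_integral integral_mult_cnj_self integral_nonneg_AE)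

lemma l2_inner_commute:
  assumes "D \<in> sets lebesgue"
  shows "l2_inner D v w = l2_inner D w v"
proof -
  have "(\<lambda>x. w x * cnj (v x)) = (\<lambda>x. cnj (v x * cnj (w x)))"
    by (simp add: mult.commute)
  then have "(\<integral>x. w x * cnj (v x) \<partial>lebesgue_on D) = cnj (\<integral>x. v x * cnj (w x) \<partial>lebesgue_on D)"
    by (simp only: Bochner_Integration.integral_cnj)
  then show ?thesis
    using assms by (simp add: l2_inner_eq_integral)
qed

lemma l2_inner_divide_left:
  "D \<in> sets lebesgue \<Longrightarrow> l2_inner D (\<lambda>x. v x / complex_of_real c) w = l2_inner D v w / c"
  by (simp add: l2_inner_eq_integral Re_divide_of_real)

lemma l2_inner_lincomb_left:
  assumes "D \<in> sets lebesgue" "square_integrable (lebesgue_on D) v"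
    "square_integrable (lebesgue_on D) w" "square_integrable (lebesgue_on D) z"
  shows "l2_inner D (\<lambda>x. complex_of_real a * v x + complex_of_real b * w x) z
           = a * l2_inner D v z + b * l2_inner D w z"
  using assms integrable_mult_cnj[OF assms(2,4)] integrable_mult_cnj[OF assms(3,4)]
  by (simp add: l2_inner_eq_integral distrib_right mult.assoc)

lemma l2_inner_diff_left:
  assumes "D \<in> sets lebesgue" "square_integrable (lebesgue_on D) v"
    "square_integrable (lebesgue_on D) w" "square_integrable (lebesgue_on D) z"
  shows "l2_inner D (\<lambda>x. v x - w x) z = l2_inner D v z - l2_inner D w z"
  using l2_inner_lincomb_left[OF assms, of 1 "-1"] by simp

lemma l2_norm_diff_square:
  assumes D: "D \<in> sets lebesgue"
    and sq: "square_integrable (lebesgue_on D) v" "square_integrable (lebesgue_on D) w"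
  shows "(l2_norm D (\<lambda>x. v x - w x))\<^sup>2 = (l2_norm D v)\<^sup>2 - 2 * l2_inner D v w + (l2_norm D w)\<^sup>2"
proof -
  let ?d = "\<lambda>x. v x - w x"
  have sq_d: "square_integrable (lebesgue_on D) ?d"
    using sq by (rule square_integrable_diff)
  have "(l2_norm D ?d)\<^sup>2 = l2_inner D v ?d - l2_inner D w ?d"
    using D sq sq_d by (simp add: l2_inner_diff_left flip: l2_inner_self)
  also have "l2_inner D v ?d = l2_inner D v v - l2_inner D w v"
    using D sq sq_d by (simp add: l2_inner_commute[of D v ?d] l2_inner_diff_left)
  also have "l2_inner D w ?d = l2_inner D v w - l2_inner D w w"
    using D sq sq_d by (simp add: l2_inner_commute[of D w ?d] l2_inner_diff_left)
  finally show ?thesis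
    using D by (simp add: l2_inner_self l2_inner_commute[of D w v])
qed

lemma l2_norm_eq_0_iff:
  assumes "D \<in> sets lebesgue" "square_integrable (lebesgue_on D) v"
  shows "l2_norm D v = 0 \<longleftrightarrow> (AE x in lebesgue. x \<in> D \<longrightarrow> v x = 0)"
  using assms integral_nonneg_eq_0_iff_AE[OF square_integrable_integrable[OF assms(2)]]
  by (simp add: l2_norm_eq_integral AE_restrict_space_iff integral_nonneg_AE)

lemma normalization_step:
  assumes D: "D \<in> sets lebesgue"
    and sq: "square_integrable (lebesgue_on D) u" "square_integrable (lebesgue_on D) h"
    and u1: "l2_norm D u = 1" and hu: "l2_inner D h u = 1"
  defines "unew \<equiv> \<lambda>x. h x / complex_of_real (l2_norm D h)"
  shows "l2_norm D h - l2_norm D u = l2_inner D (\<lambda>x. u x - unew x) u / l2_inner D unew u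
       \<and> l2_inner D (\<lambda>x. u x - unew x) u / l2_inner D unew u \<ge> 0
       \<and> (l2_norm D h = l2_norm D u \<longleftrightarrow> (AE x in lebesgue. x \<in> D \<longrightarrow> u x = h x))"
proof -
  define N where "N = l2_norm D h"
  have dist: "(l2_norm D (\<lambda>x. h x - u x))\<^sup>2 = N\<^sup>2 - 1"
    using l2_norm_diff_square[OF D sq(2,1)] u1 hu by (simp add: N_def)
  have "1 \<le> N\<^sup>2"
    using dist zero_le_power2[of "l2_norm D (\<lambda>x. h x - u x)"] by linarith
  then have "N \<ge> 1"
    using power2_le_imp_le[of 1 N] l2_norm_nonneg[OF D, of h] by (simp add: N_def)
  have unew_u: "l2_inner D unew u = 1 / N"
    using D hu by (simp add: unew_def l2_inner_divide_left N_def)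
  have "square_integrable (lebesgue_on D) unew"
    using square_integrable_mult_left[OF sq(2), of "1 / complex_of_real N"]
    by (simp add: unew_def N_def)
  then have diff_u: "l2_inner D (\<lambda>x. u x - unew x) u = 1 - 1 / N"
    using D sq u1 unew_u by (simp add: l2_inner_diff_left l2_inner_self)
  have ratio: "l2_inner D (\<lambda>x. u x - unew x) u / l2_inner D unew u = N - 1"
    unfolding diff_u unew_u using \<open>N \<ge> 1\<close> by (simp add: field_simps)
  have "N = 1 \<longleftrightarrow> N\<^sup>2 = 1"
    using \<open>N \<ge> 1\<close> by (simp add: power2_eq_1_iff)
  also have "\<dots> \<longleftrightarrow> (l2_norm D (\<lambda>x. h x - u x))\<^sup>2 = 0"
    using dist by simp
  also have "\<dots> \<longleftrightarrow> l2_norm D (\<lambda>x. h x - u x) = 0"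
    by simp
  also have "\<dots> \<longleftrightarrow> (AE x in lebesgue. x \<in> D \<longrightarrow> h x - u x = 0)"
    by (rule l2_norm_eq_0_iff[OF D square_integrable_diff[OF sq(2,1)]])
  also have "\<dots> \<longleftrightarrow> (AE x in lebesgue. x \<in> D \<longrightarrow> u x = h x)"
    by (intro AE_cong) auto
  finally have "N = 1 \<longleftrightarrow> (AE x in lebesgue. x \<in> D \<longrightarrow> u x = h x)" .
  then show ?thesis
    using ratio \<open>N \<ge> 1\<close> unfolding u1 N_def[symmetric] by simp
qed

section \<open>\<open>H\<^sup>1\<^sub>0(D)\<close> and test functions\<close>

lemma in_L2_iff_square_integrable:
  "D \<in> sets lebesgue \<Longrightarrow> in_L2 D v \<longleftrightarrow> square_integrable (lebesgue_on D) v"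
  by (simp add: in_L2_def square_integrable_def set_borel_measurable_def
      borel_measurable_restrict_space_iff set_integrable_eq)

lemma in_H10_square_integrable:
  "D \<in> sets lebesgue \<Longrightarrow> in_H10 D v \<Longrightarrow> square_integrable (lebesgue_on D) v"
  by (simp add: in_H10_def in_L2_iff_square_integrable)

lemma in_H10_has_weak_pd: "in_H10 D v \<Longrightarrow> b \<in> Basis \<Longrightarrow> has_weak_pd D v b (wpd D v b)"
  unfolding in_H10_def wpd_def by (metis someI_ex)

lemma wpd_square_integrable:
  assumes "D \<in> sets lebesgue" "in_H10 D v" "b \<in> Basis"
  shows "square_integrable (lebesgue_on D) (wpd D v b)"
  using assms in_H10_has_weak_pd[OF assms(2,3)]
  by (simp add: has_weak_pd_def in_L2_iff_square_integrable)

lemma continuous_square_integrable: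
  fixes f :: "'a::euclidean_space \<Rightarrow> complex"
  assumes f: "continuous_on UNIV f" and D: "bounded D" "D \<in> sets lebesgue"
  shows "square_integrable (lebesgue_on D) f"
proof -
  have "bounded (f ` closure D)"
    using D by (intro compact_imp_bounded compact_continuous_image continuous_on_subset[OF f]) auto
  then obtain B where B: "\<forall>y\<in>f ` closure D. norm y \<le> B"
    by (auto simp: bounded_iff)
  have "D \<in> lmeasurable"
    using D by (rule bounded_set_imp_lmeasurable)
  then have "finite_measure (lebesgue_on D)"
    by (intro finite_measureI) (simp add: emeasure_restrict_space D fmeasurable_def)
  moreover have "f \<in> borel_measurable (lebesgue_on D)"
    using D by (intro continuous_imp_measurable_on_sets_lebesgue continuous_on_subset[OF f]) auto
  ultimately show ?thesis
    using B closure_subset by (intro square_integrable_bounded[where B = B]) auto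
qed

lemma Ck_SucD: "Ck (Suc k) f \<Longrightarrow> Ck k f"
  by (induction k arbitrary: f) auto

lemma Ck_const: "Ck k (\<lambda>x::'a::euclidean_space. c::'b::real_normed_vector)"
proof (induction k arbitrary: c)
  case (Suc k)
  have "frechet_derivative (\<lambda>x::'a. c) (at x) = (\<lambda>h. 0)" for x
    by (rule frechet_derivative_at[symmetric]) (rule has_derivative_const)
  with Suc show ?case by simp
qed simp

lemma Ck_add:
  "Ck k f \<Longrightarrow> Ck k g \<Longrightarrow> Ck k (\<lambda>x::'a::euclidean_space. (f x + g x :: 'b::real_normed_vector))"
proof (induction k arbitrary: f g)
  case (Suc k)
  then have "\<And>x. f differentiable (at x)" "\<And>x. g differentiable (at x)" by auto
  then have "frechet_derivative (\<lambda>x. f x + g x) (at x)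
      = (\<lambda>h. frechet_derivative f (at x) h + frechet_derivative g (at x) h)" for x
    by (intro frechet_derivative_at[symmetric] has_derivative_add frechet_derivative_works[THEN iffD1])
  with Suc show ?case by (auto intro: continuous_on_add differentiable_add)
qed (auto intro: continuous_on_add)

lemma Ck_mult: "Ck k f \<Longrightarrow> Ck k g \<Longrightarrow> Ck k (\<lambda>x::'a::euclidean_space. (f x * g x :: complex))"
proof (induction k arbitrary: f g)
  case (Suc k)
  then have diff: "\<And>x. f differentiable (at x)" "\<And>x. g differentiable (at x)" by auto
  then have deriv: "frechet_derivative (\<lambda>x. f x * g x) (at x)
      = (\<lambda>h. f x * frechet_derivative g (at x) h + frechet_derivative f (at x) h * g x)" for x
    by (intro frechet_derivative_at[symmetric] has_derivative_mult frechet_derivative_works[THEN iffD1])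
  have "Ck k (\<lambda>x. frechet_derivative (\<lambda>x. f x * g x) (at x) b)" if "b \<in> Basis" for b
    unfolding deriv using Suc that Ck_SucD[OF Suc.prems(1)] Ck_SucD[OF Suc.prems(2)]
    by (intro Ck_add Suc.IH) auto
  with Suc diff show ?case
    by (auto intro: continuous_on_mult differentiable_mult)
qed (auto intro: continuous_on_mult)

lemma Ck_cnj: "Ck k f \<Longrightarrow> Ck k (\<lambda>x::'a::euclidean_space. cnj (f x))"
proof (induction k arbitrary: f)
  case (Suc k)
  then have "\<And>x. f differentiable (at x)" by auto
  then have "frechet_derivative (\<lambda>x. cnj (f x)) (at x) = (\<lambda>h. cnj (frechet_derivative f (at x) h))" for x
    by (intro frechet_derivative_at[symmetric] has_derivative_cnj frechet_derivative_works[THEN iffD1])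
  with Suc show ?case by (auto simp: differentiable_cnj_iff intro: continuous_on_cnj)
qed (auto intro: continuous_on_cnj)

lemma Ck_coordinate: "Ck k (\<lambda>x::'a::euclidean_space. complex_of_real (x \<bullet> e))"
proof (cases k)
  case (Suc m)
  have deriv: "((\<lambda>x::'a. complex_of_real (x \<bullet> e)) has_derivative (\<lambda>h. complex_of_real (h \<bullet> e))) (at x)" for x
    by (intro derivative_eq_intros) auto
  then have "frechet_derivative (\<lambda>x::'a. complex_of_real (x \<bullet> e)) (at x) = (\<lambda>h. complex_of_real (h \<bullet> e))" for x
    by (simp flip: frechet_derivative_at)
  with Suc deriv show ?thesis
    by (auto simp: Ck_const differentiable_def intro!: continuous_intros)
qed (auto intro!: continuous_intros)

lemma test_fun_Ck: "test_fun D \<phi> \<Longrightarrow> Ck k \<phi>"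
  by (simp add: test_fun_def smooth_fun_def)

lemma test_fun_differentiable: "test_fun D \<phi> \<Longrightarrow> \<phi> differentiable (at x)"
  using test_fun_Ck[of D \<phi> 1] by simp

lemma continuous_on_cpd: "test_fun D \<phi> \<Longrightarrow> b \<in> Basis \<Longrightarrow> continuous_on UNIV (cpd \<phi> b)"
  using test_fun_Ck[of D \<phi> 1] unfolding cpd_def by auto

lemma test_fun_coordinate_mult_cnj:
  assumes "test_fun D \<phi>"
  shows "test_fun D (\<lambda>x. complex_of_real (x \<bullet> e) * cnj (\<phi> x))"
proof -
  have "closure {x. complex_of_real (x \<bullet> e) * cnj (\<phi> x) \<noteq> 0} \<subseteq> closure {x. \<phi> x \<noteq> 0}"
    by (intro closure_mono) auto
  moreover have "compact (closure {x. \<phi> x \<noteq> 0})"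
    using assms by (simp add: test_fun_def)
  ultimately have "compact (closure {x. complex_of_real (x \<bullet> e) * cnj (\<phi> x) \<noteq> 0})"
    by (meson bounded_subset closure_subset compact_closure compact_imp_bounded order_trans)
  moreover have "smooth_fun (\<lambda>x. complex_of_real (x \<bullet> e) * cnj (\<phi> x))"
    unfolding smooth_fun_def using assms
    by (intro allI Ck_mult Ck_coordinate Ck_cnj test_fun_Ck)
  ultimately show ?thesis
    using assms \<open>closure _ \<subseteq> closure _\<close> unfolding test_fun_def by blast
qed

lemma cpd_coordinate_mult_cnj:
  assumes "test_fun D \<phi>" "e \<in> Basis"
  shows "cpd (\<lambda>x. complex_of_real (x \<bullet> e) * cnj (\<phi> x)) e x
           = cnj (complex_of_real (x \<bullet> e) * cpd \<phi> e x + \<phi> x)"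
proof -
  have "((\<lambda>x. complex_of_real (x \<bullet> e) * cnj (\<phi> x)) has_derivative
      (\<lambda>h. complex_of_real (x \<bullet> e) * cnj (frechet_derivative \<phi> (at x) h)
           + complex_of_real (h \<bullet> e) * cnj (\<phi> x))) (at x)"
    using test_fun_differentiable[OF assms(1)]
    by (intro has_derivative_mult has_derivative_cnj frechet_derivative_works[THEN iffD1] derivative_eq_intros)
       auto
  then show ?thesis
    using assms(2) by (simp add: cpd_def flip: frechet_derivative_at)
qed

section \<open>A Poincare-type lemma\<close>

lemma integral_norm_square_le_if_orthogonal:
  assumes q: "square_integrable M q" and w: "square_integrable M w" and p: "square_integrable M p"
    and orth: "(\<integral>x. q x * cnj (w x + p x) \<partial>M) = 0"
  shows "(\<integral>x. (cmod (q x))\<^sup>2 \<partial>M)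
           \<le> sqrt (\<integral>x. (cmod (q x))\<^sup>2 \<partial>M)
              * (sqrt (\<integral>x. (cmod (w x))\<^sup>2 \<partial>M) + sqrt (\<integral>x. (cmod (p x - q x))\<^sup>2 \<partial>M))"
proof -
  have pq: "square_integrable M (\<lambda>x. p x - q x)"
    using p q by (rule square_integrable_diff)
  have int: "integrable M (\<lambda>x. q x * cnj (w x + p x))" "integrable M (\<lambda>x. q x * cnj (w x))"
    "integrable M (\<lambda>x. q x * cnj (p x - q x))"
    using integrable_mult_cnj[OF q square_integrable_add[OF w p]] integrable_mult_cnj[OF q w]
      integrable_mult_cnj[OF q pq] by auto
  have "(\<integral>x. q x * cnj (q x) \<partial>M)
      = (\<integral>x. q x * cnj (w x + p x) - q x * cnj (w x) - q x * cnj (p x - q x) \<partial>M)"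
    by (intro Bochner_Integration.integral_cong) (auto simp: algebra_simps)
  also have "\<dots> = - (\<integral>x. q x * cnj (w x) \<partial>M) - (\<integral>x. q x * cnj (p x - q x) \<partial>M)"
    using int orth by simp
  finally have "(\<integral>x. (cmod (q x))\<^sup>2 \<partial>M)
      = Re (- (\<integral>x. q x * cnj (w x) \<partial>M) - (\<integral>x. q x * cnj (p x - q x) \<partial>M))"
    by (metis Re_complex_of_real integral_mult_cnj_self)
  also have "\<dots> \<le> cmod (\<integral>x. q x * cnj (w x) \<partial>M) + cmod (\<integral>x. q x * cnj (p x - q x) \<partial>M)"
    using abs_Re_le_cmod[of "\<integral>x. q x * cnj (w x) \<partial>M"]
      abs_Re_le_cmod[of "\<integral>x. q x * cnj (p x - q x) \<partial>M"]
    by (simp only: minus_complex.sel uminus_complex.sel)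
  also have "\<dots> \<le> sqrt (\<integral>x. (cmod (q x))\<^sup>2 \<partial>M) * sqrt (\<integral>x. (cmod (w x))\<^sup>2 \<partial>M)
      + sqrt (\<integral>x. (cmod (q x))\<^sup>2 \<partial>M) * sqrt (\<integral>x. (cmod (p x - q x))\<^sup>2 \<partial>M)"
    using q w pq by (intro add_mono cmod_integral_mult_cnj_le)
  finally show ?thesis
    by (simp add: distrib_left)
qed

text \<open>Testing the vanishing weak derivative \<open>\<partial>\<^sub>e q\<close> against \<open>x\<^sub>e cnj \<phi>\<close> shows that \<open>q\<close> is
  orthogonal to \<open>x\<^sub>e \<partial>\<^sub>e \<phi> + \<phi>\<close>.\<close>

lemma orthogonal_if_weak_pd_eq_0:
  assumes D: "D \<in> sets lebesgue" and e: "e \<in> Basis" and g: "has_weak_pd D q e g"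
    and g0: "AE x in lebesgue_on D. g x = 0" and \<phi>: "test_fun D \<phi>"
  shows "(\<integral>x. q x * cnj (complex_of_real (x \<bullet> e) * cpd \<phi> e x + \<phi> x) \<partial>lebesgue_on D) = 0"
proof -
  let ?\<psi> = "\<lambda>x. complex_of_real (x \<bullet> e) * cnj (\<phi> x)"
  have "(\<integral>x. q x * cpd ?\<psi> e x \<partial>lebesgue_on D) = - (\<integral>x. g x * ?\<psi> x \<partial>lebesgue_on D)"
    using g test_fun_coordinate_mult_cnj[OF \<phi>]
    by (simp add: has_weak_pd_def set_integral_eq_integral_on[OF D])
  also have "(\<integral>x. g x * ?\<psi> x \<partial>lebesgue_on D) = 0"
    using g0 by (intro integral_eq_zero_AE) (auto elim!: AE_mp)
  finally show ?thesis
    by (simp add: cpd_coordinate_mult_cnj[OF \<phi> e])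
qed

lemma sqrt_integral_mult_le:
  fixes c :: "'a \<Rightarrow> real"
  assumes R: "0 \<le> R" "\<And>x. x \<in> space M \<Longrightarrow> \<bar>c x\<bar> \<le> R"
    and f: "square_integrable M f" and cf: "square_integrable M (\<lambda>x. complex_of_real (c x) * f x)"
  shows "sqrt (\<integral>x. (cmod (complex_of_real (c x) * f x))\<^sup>2 \<partial>M) \<le> R * sqrt (\<integral>x. (cmod (f x))\<^sup>2 \<partial>M)"
proof -
  have "(\<integral>x. (cmod (complex_of_real (c x) * f x))\<^sup>2 \<partial>M) \<le> (\<integral>x. R\<^sup>2 * (cmod (f x))\<^sup>2 \<partial>M)"
  proof (intro integral_mono)
    fix x assume "x \<in> space M"
    then have "(c x)\<^sup>2 \<le> R\<^sup>2"
      using R by (metis abs_ge_zero power2_abs power_mono)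
    then show "(cmod (complex_of_real (c x) * f x))\<^sup>2 \<le> R\<^sup>2 * (cmod (f x))\<^sup>2"
      by (simp add: norm_mult power_mult_distrib mult_right_mono)
  qed (use f cf in \<open>auto simp: square_integrable_def\<close>)
  then have "sqrt (\<integral>x. (cmod (complex_of_real (c x) * f x))\<^sup>2 \<partial>M)
      \<le> sqrt (R\<^sup>2 * (\<integral>x. (cmod (f x))\<^sup>2 \<partial>M))"
    by (simp add: real_sqrt_le_mono)
  then show ?thesis
    using R(1) by (simp add: real_sqrt_mult)
qed

lemma integral_norm_square_le_test_fun:
  fixes D :: "'a::euclidean_space set"
  assumes D: "bounded D" "D \<in> sets lebesgue" and R: "0 \<le> R" "\<And>x. x \<in> D \<Longrightarrow> norm x \<le> R"
    and e: "e \<in> Basis" and q: "in_H10 D q" and g0: "AE x in lebesgue_on D. wpd D q e x = 0"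
    and \<phi>: "test_fun D \<phi>"
  shows "(\<integral>x. (cmod (q x))\<^sup>2 \<partial>lebesgue_on D)
           \<le> sqrt (\<integral>x. (cmod (q x))\<^sup>2 \<partial>lebesgue_on D)
              * (R * l2_norm D (\<lambda>x. cpd \<phi> e x - wpd D q e x) + l2_norm D (\<lambda>x. \<phi> x - q x))"
proof -
  let ?M = "lebesgue_on D" and ?g = "wpd D q e"
  let ?w = "\<lambda>x. complex_of_real (x \<bullet> e) * cpd \<phi> e x"
  have "continuous_on UNIV \<phi>" "continuous_on UNIV (cpd \<phi> e)"
    using test_fun_Ck[OF \<phi>, of 0] continuous_on_cpd[OF \<phi> e] by auto
  then have sq: "square_integrable ?M \<phi>" "square_integrable ?M (cpd \<phi> e)" "square_integrable ?M ?w"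
    using D by (auto intro!: continuous_square_integrable continuous_intros)
  have q_sq: "square_integrable ?M q"
    using D(2) q by (rule in_H10_square_integrable)
  have orth: "(\<integral>x. (cmod (q x))\<^sup>2 \<partial>?M)
      \<le> sqrt (\<integral>x. (cmod (q x))\<^sup>2 \<partial>?M) * (sqrt (\<integral>x. (cmod (?w x))\<^sup>2 \<partial>?M) + l2_norm D (\<lambda>x. \<phi> x - q x))"
    unfolding l2_norm_eq_integral[OF D(2)]
    using q_sq sq orthogonal_if_weak_pd_eq_0[OF D(2) e in_H10_has_weak_pd[OF q e] g0 \<phi>]
    by (intro integral_norm_square_le_if_orthogonal)
  have [measurable]: "cpd \<phi> e \<in> borel_measurable ?M" "?g \<in> borel_measurable ?M"
    using sq(2) wpd_square_integrable[OF D(2) q e] by (auto simp: square_integrable_def)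
  have "(\<integral>x. (cmod (cpd \<phi> e x))\<^sup>2 \<partial>?M) = (\<integral>x. (cmod (cpd \<phi> e x - ?g x))\<^sup>2 \<partial>?M)"
    by (rule integral_cong_AE) (measurable, use g0 in \<open>auto elim!: AE_mp\<close>)
  moreover have "\<bar>x \<bullet> e\<bar> \<le> R" if "x \<in> space ?M" for x
    using that R(2)[of x] Basis_le_norm[OF e, of x] by simp
  ultimately have "sqrt (\<integral>x. (cmod (?w x))\<^sup>2 \<partial>?M) \<le> R * l2_norm D (\<lambda>x. cpd \<phi> e x - ?g x)"
    using sqrt_integral_mult_le[OF R(1) _ sq(2,3)] D(2) by (simp add: l2_norm_eq_integral)
  moreover have "0 \<le> sqrt (\<integral>x. (cmod (q x))\<^sup>2 \<partial>?M)"
    by (simp add: integral_nonneg_AE)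
  ultimately show ?thesis
    using orth by (meson add_right_mono mult_left_mono order_trans)
qed

lemma in_H10_eq_0_if_wpd_eq_0:
  fixes D :: "'a::euclidean_space set"
  assumes D: "open D" "bounded D" and e: "e \<in> Basis" and q: "in_H10 D q"
    and g0: "AE x in lebesgue_on D. wpd D q e x = 0"
  shows "AE x in lebesgue_on D. q x = 0"
proof -
  let ?M = "lebesgue_on D" and ?g = "wpd D q e"
  have D_sets: "D \<in> sets lebesgue"
    using D(1) by (rule open_imp_sets_lebesgue)
  obtain \<phi>s where \<phi>s: "\<And>k. test_fun D (\<phi>s k)"
    and lim_\<phi>: "(\<lambda>k. l2_norm D (\<lambda>x. \<phi>s k x - q x)) \<longlonglongrightarrow> 0"
    and lim_d\<phi>: "(\<lambda>k. l2_norm D (\<lambda>x. cpd (\<phi>s k) e x - ?g x)) \<longlonglongrightarrow> 0"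
    using q e unfolding in_H10_def by blast
  obtain R where "R > 0" and R: "\<And>x. x \<in> D \<Longrightarrow> norm x \<le> R"
    using D by (auto simp: bounded_pos)
  define nq where "nq = sqrt (\<integral>x. (cmod (q x))\<^sup>2 \<partial>?M)"
  have bound: "(\<integral>x. (cmod (q x))\<^sup>2 \<partial>?M)
      \<le> nq * (R * l2_norm D (\<lambda>x. cpd (\<phi>s k) e x - ?g x) + l2_norm D (\<lambda>x. \<phi>s k x - q x))" for k
    unfolding nq_def using D(2) D_sets \<open>R > 0\<close> R e q g0 \<phi>s
    by (intro integral_norm_square_le_test_fun) auto
  have "(\<lambda>k. nq * (R * l2_norm D (\<lambda>x. cpd (\<phi>s k) e x - ?g x) + l2_norm D (\<lambda>x. \<phi>s k x - q x)))
      \<longlonglongrightarrow> nq * (R * 0 + 0)"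
    by (intro tendsto_intros lim_\<phi> lim_d\<phi>)
  then have "(\<integral>x. (cmod (q x))\<^sup>2 \<partial>?M) \<le> 0"
    using LIMSEQ_le_const[where a = "\<integral>x. (cmod (q x))\<^sup>2 \<partial>?M"] bound by fastforce
  then have "(\<integral>x. (cmod (q x))\<^sup>2 \<partial>?M) = 0"
    by (simp add: integral_nonneg_AE order_antisym)
  then show ?thesis
    using integral_nonneg_eq_0_iff_AE[OF square_integrable_integrable[OF
        in_H10_square_integrable[OF D_sets q]]]
    by simp
qed

section \<open>Coercivity of the form\<close>

lemma l2_inner_real_weight:
  "D \<in> sets lebesgue \<Longrightarrow>
     l2_inner D (\<lambda>x. complex_of_real (w x) * v x) v = (\<integral>x. w x * (cmod (v x))\<^sup>2 \<partial>lebesgue_on D)"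
proof -
  have "(\<lambda>x. complex_of_real (w x) * v x * cnj (v x)) = (\<lambda>x. complex_of_real (w x * (cmod (v x))\<^sup>2))"
    by (simp only: mult.assoc complex_norm_square of_real_mult)
  then show "D \<in> sets lebesgue \<Longrightarrow> ?thesis"
    by (simp only: l2_inner_eq_integral integral_complex_of_real Re_complex_of_real)
qed

lemma A_form_eq_0_if_null:
  assumes D: "D \<in> sets lebesgue" and e12: "e1 \<in> Basis" "e2 \<in> Basis"
    and q0: "AE x in lebesgue_on D. q x = 0"
    and grad0: "\<And>b. b \<in> Basis \<Longrightarrow> AE x in lebesgue_on D. wpd D q b x = 0"
  shows "A_form D e1 e2 V \<beta> \<Omega> z q w = 0"
proof -
  have grad_term: "l2_inner D (wpd D q b) (wpd D w b) = 0" if "b \<in> Basis" for b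
    unfolding l2_inner_eq_integral[OF D] using grad0[OF that]
    by (subst integral_eq_zero_AE) (auto elim!: AE_mp)
  have rotation_term: "l2_inner D (L3 D e1 e2 q) w = 0"
    unfolding l2_inner_eq_integral[OF D] L3_def using grad0[OF e12(1)] grad0[OF e12(2)]
    by (subst integral_eq_zero_AE) (auto elim!: AE_mp)
  have weighted_term: "l2_inner D (\<lambda>x. complex_of_real (f x) * q x) w = 0" for f
    unfolding l2_inner_eq_integral[OF D] using q0
    by (subst integral_eq_zero_AE) (auto elim!: AE_mp)
  show ?thesis
    unfolding A_form_def rotation_term weighted_term using grad_term by simp
qed

lemma mult_le_weighted_squares:
  fixes P Q s :: real
  assumes "s > 0"
  shows "P * Q \<le> s / 4 * P\<^sup>2 + Q\<^sup>2 / s"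
proof -
  have "0 \<le> (s * P / 2 - Q)\<^sup>2 / s"
    using assms by simp
  also have "\<dots> = s / 4 * P\<^sup>2 + Q\<^sup>2 / s - P * Q"
    using assms by (simp add: power2_eq_square field_simps)
  finally show ?thesis by simp
qed

lemma rotation_pointwise_bound:
  fixes x1 x2 \<Omega> K V :: real and a1 a2 c :: complex
  assumes K: "K > 0" and V: "(1 + K) / 4 * \<Omega>\<^sup>2 * (x1\<^sup>2 + x2\<^sup>2) \<le> V"
  shows "\<bar>\<Omega>\<bar> * cmod (- \<i> * (complex_of_real x1 * a2 - complex_of_real x2 * a1)) * cmod c
           \<le> V * (cmod c)\<^sup>2 + ((cmod a1)\<^sup>2 + (cmod a2)\<^sup>2) / (1 + K)"
proof -
  define s where "s = 1 + K"
  have "s > 0"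
    using K by (simp add: s_def)
  have "cmod (- \<i> * (complex_of_real x1 * a2 - complex_of_real x2 * a1))
      \<le> \<bar>x1\<bar> * cmod a2 + \<bar>x2\<bar> * cmod a1"
    using norm_triangle_ineq4[of "complex_of_real x1 * a2" "complex_of_real x2 * a1"]
    by (simp add: norm_mult)
  then have "\<bar>\<Omega>\<bar> * cmod (- \<i> * (complex_of_real x1 * a2 - complex_of_real x2 * a1)) * cmod c
      \<le> \<bar>\<Omega>\<bar> * (\<bar>x1\<bar> * cmod a2 + \<bar>x2\<bar> * cmod a1) * cmod c"
    by (intro mult_right_mono mult_left_mono) auto
  also have "\<dots> = (\<bar>\<Omega>\<bar> * cmod c * \<bar>x1\<bar>) * cmod a2 + (\<bar>\<Omega>\<bar> * cmod c * \<bar>x2\<bar>) * cmod a1"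
    by (simp add: algebra_simps)
  also have "\<dots> \<le> (s / 4 * (\<bar>\<Omega>\<bar> * cmod c * \<bar>x1\<bar>)\<^sup>2 + (cmod a2)\<^sup>2 / s)
      + (s / 4 * (\<bar>\<Omega>\<bar> * cmod c * \<bar>x2\<bar>)\<^sup>2 + (cmod a1)\<^sup>2 / s)"
    using \<open>s > 0\<close> by (intro add_mono mult_le_weighted_squares)
  also have "\<dots> = s / 4 * \<Omega>\<^sup>2 * (x1\<^sup>2 + x2\<^sup>2) * (cmod c)\<^sup>2 + ((cmod a1)\<^sup>2 + (cmod a2)\<^sup>2) / s"
    by (simp add: power_mult_distrib add_divide_distrib algebra_simps)
  also have "\<dots> \<le> V * (cmod c)\<^sup>2 + ((cmod a1)\<^sup>2 + (cmod a2)\<^sup>2) / s"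
    unfolding s_def by (intro add_right_mono mult_right_mono V) simp
  finally show ?thesis
    by (simp add: s_def)
qed

locale rotating_condensate =
  fixes D :: "'a::euclidean_space set" and e1 e2 :: 'a and V :: "'a \<Rightarrow> real" and \<beta> \<Omega> K :: real
  assumes e12: "e1 \<in> Basis" "e2 \<in> Basis" "e1 \<noteq> e2"
    and open_D: "open D" and bounded_D: "bounded D"
    and V_meas: "set_borel_measurable lebesgue D V"
    and V_bdd: "\<exists>M. AE x in lebesgue. x \<in> D \<longrightarrow> \<bar>V x\<bar> \<le> M"
    and \<beta>: "\<beta> \<ge> 0" and K: "K > 0"
    and VK: "AE x in lebesgue. x \<in> D \<longrightarrow>
               V x - (1 + K) / 4 * \<Omega>\<^sup>2 * ((x \<bullet> e1)\<^sup>2 + (x \<bullet> e2)\<^sup>2) \<ge> 0"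
begin

lemma D_sets: "D \<in> sets lebesgue"
  using open_D by (rule open_imp_sets_lebesgue)

lemma integrable_V_norm_square:
  assumes "square_integrable (lebesgue_on D) q"
  shows "integrable (lebesgue_on D) (\<lambda>x. V x * (cmod (q x))\<^sup>2)"
proof -
  obtain B where B: "AE x in lebesgue_on D. \<bar>V x\<bar> \<le> B"
    using V_bdd by (auto simp: AE_restrict_space_iff D_sets)
  have [measurable]: "V \<in> borel_measurable (lebesgue_on D)" "q \<in> borel_measurable (lebesgue_on D)"
    using V_meas assms
    by (simp_all add: set_borel_measurable_def borel_measurable_restrict_space_iff D_sets
        square_integrable_def)
  show ?thesis
  proof (rule Bochner_Integration.integrable_bound)
    show "integrable (lebesgue_on D) (\<lambda>x. B * (cmod (q x))\<^sup>2)"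
      using assms by (simp add: square_integrable_integrable)
    show "(\<lambda>x. V x * (cmod (q x))\<^sup>2) \<in> borel_measurable (lebesgue_on D)"
      by measurable
    show "AE x in lebesgue_on D. norm (V x * (cmod (q x))\<^sup>2) \<le> norm (B * (cmod (q x))\<^sup>2)"
      using B by eventually_elim (auto simp: abs_mult intro!: mult_right_mono)
  qed
qed

lemma V_ge_rotation_weight:
  "AE x in lebesgue_on D. (1 + K) / 4 * \<Omega>\<^sup>2 * ((x \<bullet> e1)\<^sup>2 + (x \<bullet> e2)\<^sup>2) \<le> V x"
  using VK by (simp add: AE_restrict_space_iff D_sets)

lemma V_nonneg: "AE x in lebesgue_on D. 0 \<le> V x"
  using V_ge_rotation_weight
proof eventually_elim
  case (elim x)
  have "0 \<le> (1 + K) / 4 * \<Omega>\<^sup>2 * ((x \<bullet> e1)\<^sup>2 + (x \<bullet> e2)\<^sup>2)"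
    using K by simp
  with elim show ?case
    by linarith
qed

lemma rotation_integrand_le:
  "AE x in lebesgue_on D. \<bar>\<Omega>\<bar> * cmod (L3 D e1 e2 q x) * cmod (q x)
     \<le> V x * (cmod (q x))\<^sup>2 + (\<Sum>b\<in>Basis. (cmod (wpd D q b x))\<^sup>2) / (1 + K)"
  using V_ge_rotation_weight
proof eventually_elim
  case (elim x)
  have "(cmod (wpd D q e1 x))\<^sup>2 + (cmod (wpd D q e2 x))\<^sup>2 \<le> (\<Sum>b\<in>Basis. (cmod (wpd D q b x))\<^sup>2)"
    using sum_mono2[of Basis "{e1, e2}" "\<lambda>b. (cmod (wpd D q b x))\<^sup>2"] e12 by simp
  with rotation_pointwise_bound[OF K elim] K show ?case
    unfolding L3_def by (smt (verit) divide_right_mono)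
qed

lemma rotation_term_le:
  assumes q: "in_H10 D q"
  shows "\<Omega> * l2_inner D (L3 D e1 e2 q) q
           \<le> (\<integral>x. V x * (cmod (q x))\<^sup>2 \<partial>lebesgue_on D)
              + (\<Sum>b\<in>Basis. l2_inner D (wpd D q b) (wpd D q b)) / (1 + K)"
proof -
  let ?M = "lebesgue_on D"
  define H where "H x = (\<Sum>b\<in>Basis. (cmod (wpd D q b x))\<^sup>2)" for x
  have H_int: "integrable ?M H"
    unfolding H_def using wpd_square_integrable[OF D_sets q]
    by (auto intro!: Bochner_Integration.integrable_sum square_integrable_integrable)
  have grad: "(\<Sum>b\<in>Basis. l2_inner D (wpd D q b) (wpd D q b)) = (\<integral>x. H x \<partial>?M)"
    unfolding H_def using wpd_square_integrable[OF D_sets q]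
    by (simp add: l2_inner_eq_integral[OF D_sets] integral_mult_cnj_self
        Bochner_Integration.integral_sum square_integrable_integrable)
  have V_int: "integrable ?M (\<lambda>x. V x * (cmod (q x))\<^sup>2)"
    using D_sets q by (intro integrable_V_norm_square in_H10_square_integrable)
  have nonneg: "AE x in ?M. 0 \<le> V x * (cmod (q x))\<^sup>2 + H x / (1 + K)"
    using V_nonneg
    by eventually_elim (use K in \<open>auto simp: H_def intro!: add_nonneg_nonneg divide_nonneg_pos sum_nonneg\<close>)
  have Re_le: "\<Omega> * Re c \<le> \<bar>\<Omega>\<bar> * cmod c" for c
  proof -
    have "\<Omega> * Re c \<le> \<bar>\<Omega>\<bar> * \<bar>Re c\<bar>"
      by (metis abs_ge_self abs_mult)
    also have "\<dots> \<le> \<bar>\<Omega>\<bar> * cmod c"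
      by (intro mult_left_mono abs_Re_le_cmod) simp
    finally show ?thesis .
  qed
  have "\<Omega> * l2_inner D (L3 D e1 e2 q) q \<le> \<bar>\<Omega>\<bar> * cmod (\<integral>x. L3 D e1 e2 q x * cnj (q x) \<partial>?M)"
    using Re_le by (simp only: l2_inner_eq_integral[OF D_sets])
  also have "\<dots> \<le> (\<integral>x. \<bar>\<Omega>\<bar> * cmod (L3 D e1 e2 q x) * cmod (q x) \<partial>?M)"
    using integral_norm_bound[of ?M "\<lambda>x. L3 D e1 e2 q x * cnj (q x)"]
    by (simp add: norm_mult mult.assoc mult_left_mono)
  also have "\<dots> \<le> (\<integral>x. V x * (cmod (q x))\<^sup>2 + H x / (1 + K) \<partial>?M)"
    using V_int H_int rotation_integrand_le[of q, folded H_def] nonneg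
    by (intro integral_mono_AE') auto
  also have "\<dots> = (\<integral>x. V x * (cmod (q x))\<^sup>2 \<partial>?M) + (\<integral>x. H x \<partial>?M) / (1 + K)"
    using V_int H_int by simp
  finally show ?thesis
    unfolding grad .
qed

text \<open>The rotation term is absorbed by the potential and a fraction \<open>1 / (1 + K)\<close> of the
  kinetic energy.\<close>

lemma A_form_diag_ge:
  assumes q: "in_H10 D q"
  shows "K / (1 + K) * (\<Sum>b\<in>Basis. l2_inner D (wpd D q b) (wpd D q b))
           \<le> A_form D e1 e2 V \<beta> \<Omega> z q q"
proof -
  let ?G = "\<Sum>b\<in>Basis. l2_inner D (wpd D q b) (wpd D q b)"
  have "0 \<le> l2_inner D (\<lambda>x. complex_of_real ((cmod (z x))\<^sup>2) * q x) q"
    by (simp only: l2_inner_real_weight[OF D_sets]) (simp add: integral_nonneg_AE)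
  then have "0 \<le> \<beta> * l2_inner D (\<lambda>x. complex_of_real ((cmod (z x))\<^sup>2) * q x) q"
    using \<beta> by simp
  moreover have "K / (1 + K) * ?G = ?G - ?G / (1 + K)"
    using K by (simp add: field_simps)
  ultimately show ?thesis
    using rotation_term_le[OF q] unfolding A_form_def l2_inner_real_weight[OF D_sets]
    by linarith
qed

lemma l2_inner_ne_0_if_A_form_solution:
  assumes u: "in_H10 D u" "l2_norm D u = 1" and q: "in_H10 D q"
    and q_eq: "\<forall>w. in_H10 D w \<longrightarrow> A_form D e1 e2 V \<beta> \<Omega> u q w = l2_inner D u w"
  shows "l2_inner D u q \<noteq> 0"
proof
  assume "l2_inner D u q = 0"
  then have "A_form D e1 e2 V \<beta> \<Omega> u q q = 0"
    using q_eq q by simp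
  then have "K / (1 + K) * (\<Sum>b\<in>Basis. (l2_norm D (wpd D q b))\<^sup>2) \<le> 0"
    using A_form_diag_ge[OF q, of u] by (simp add: l2_inner_self[OF D_sets])
  then have "(\<Sum>b\<in>Basis. (l2_norm D (wpd D q b))\<^sup>2) = 0"
    using K by (smt (verit) divide_pos_pos mult_pos_pos sum_nonneg zero_le_power2)
  then have "l2_norm D (wpd D q b) = 0" if "b \<in> Basis" for b
    using that by (simp add: sum_nonneg_eq_0_iff)
  then have grad0: "AE x in lebesgue_on D. wpd D q b x = 0" if "b \<in> Basis" for b
    using that l2_norm_eq_0_iff[OF D_sets wpd_square_integrable[OF D_sets q that]]
    by (simp add: AE_restrict_space_iff D_sets)
  have "AE x in lebesgue_on D. q x = 0"
    using open_D bounded_D e12(1) q grad0[OF e12(1)] by (rule in_H10_eq_0_if_wpd_eq_0)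
  then have "A_form D e1 e2 V \<beta> \<Omega> u q u = 0"
    using D_sets e12 grad0 by (intro A_form_eq_0_if_null)
  moreover have "l2_inner D u u = 1"
    using u by (simp add: l2_inner_self[OF D_sets])
  ultimately show False
    using q_eq u by simp
qed

end

theorem lemma4p1:
  fixes D :: "'a::euclidean_space set" and V :: "'a \<Rightarrow> real"
    and \<beta> \<Omega> K \<tau> :: real and e1 e2 :: 'a
    and u q uhat unew :: "'a \<Rightarrow> complex" and \<gamma> :: real
  assumes dim: "DIM('a) \<in> {2, 3}"
    and e12: "e1 \<in> Basis" "e2 \<in> Basis" "e1 \<noteq> e2"
    and dom: "open D" "connected D" "D \<noteq> {}" "bounded D" "convex D"
    and V_meas: "set_borel_measurable lebesgue D V"
    and V_bdd: "\<exists>M. AE x in lebesgue. x \<in> D \<longrightarrow> \<bar>V x\<bar> \<le> M"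
    and V_nonneg: "AE x in lebesgue. x \<in> D \<longrightarrow> V x \<ge> 0"
    and \<beta>: "\<beta> \<ge> 0"
    and K: "K > 0"
    and VK: "AE x in lebesgue. x \<in> D \<longrightarrow>
               V x - (1 + K) / 4 * \<Omega>\<^sup>2 * ((x \<bullet> e1)\<^sup>2 + (x \<bullet> e2)\<^sup>2) \<ge> 0"
    and u_S: "in_H10 D u" "l2_norm D u = 1"
    and q_H10: "in_H10 D q"
    and q_eq: "\<forall>w. in_H10 D w \<longrightarrow> A_form D e1 e2 V \<beta> \<Omega> u q w = l2_inner D u w"
    and \<tau>: "\<tau> > 0"
    and \<gamma>_def: "\<gamma> = inverse (l2_inner D u q)"
    and uhat_def: "uhat = (\<lambda>x. complex_of_real (1 - \<tau>) * u x + complex_of_real (\<tau> * \<gamma>) * q x)"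
    and unew_def: "unew = (\<lambda>x. uhat x / complex_of_real (l2_norm D uhat))"
  shows "l2_norm D uhat - l2_norm D u
           = l2_inner D (\<lambda>x. u x - unew x) u / l2_inner D unew u
       \<and> l2_inner D (\<lambda>x. u x - unew x) u / l2_inner D unew u \<ge> 0
       \<and> (l2_norm D uhat = l2_norm D u \<longleftrightarrow> (AE x in lebesgue. x \<in> D \<longrightarrow> u x = uhat x))"
proof -
  interpret rotating_condensate D e1 e2 V \<beta> \<Omega> K
    using e12 dom V_meas V_bdd \<beta> K VK by unfold_locales auto
  have u_sq: "square_integrable (lebesgue_on D) u" and q_sq: "square_integrable (lebesgue_on D) q"
    using D_sets u_S(1) q_H10 by (auto intro: in_H10_square_integrable)
  have uhat_sq: "square_integrable (lebesgue_on D) uhat"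
    unfolding uhat_def using u_sq q_sq by (intro square_integrable_add square_integrable_mult_left)
  have "l2_inner D u q \<noteq> 0"
    using u_S q_H10 q_eq by (rule l2_inner_ne_0_if_A_form_solution)
  then have "l2_inner D uhat u = 1"
    unfolding uhat_def
    using l2_inner_lincomb_left[OF D_sets u_sq q_sq u_sq, of "1 - \<tau>" "\<tau> * \<gamma>"] u_S(2)
    by (simp add: l2_inner_self[OF D_sets] l2_inner_commute[OF D_sets, of q u] \<gamma>_def)
  then show ?thesis
    using normalization_step[OF D_sets u_sq uhat_sq u_S(2)] unfolding unew_def by simp
qed

end
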